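(* Let $\mathcal{X}$ and $\mathcal{Y}$ be finite sets, let $\mathcal{M}\subseteq\mathcal{X}\times\mathcal{Y}$ be the set of actual matches, and let $\hat{\mathcal{M}}_H\subseteq\mathcal{X}\times\mathcal{Y}$ be a fixed set (the matches identified by a holdout query algorithm, chosen independently of the validation sample). For $x\in\mathcal{X}$ let $\mathcal{M}(x)$ and $\hat{\mathcal{M}}_H(x)$ be the sets of pairs in $\mathcal{M}$, respectively $\hat{\mathcal{M}}_H$, whose first coordinate is $x$. Let $\hat{\mathcal{X}}_H=\{x\in\mathcal{X}:\hat{\mathcal{M}}_H(x)\ne\emptyset\}$ and $\mathcal{X}'=\{x\in\mathcal{X}:\mathcal{M}(x)\neq\emptyset\}$; define $p_H(x)=|\hat{\mathcal{M}}_H(x)\cap\mathcal{M}(x)|/|\hat{\mathcal{M}}_H(x)|$ for $x\in\hat{\mathcal{X}}_H$ and $r_H(x)=|\hat{\mathcal{M}}_H(x)\cap\mathcal{M}(x)|/|\mathcal{M}(x)|$ for $x\in\mathcal{X}'$, and the query precision and recall $P_H=\frac{1}{|\hat{\mathcal{X}}_H|}\sum_{x\in\hat{\mathcal{X}}_H}p_H(x)$, $R_H=\frac{1}{|\mathcal{X}'|}\sum_{x\in\mathcal{X}'}r_H(x)$. Let $\mathcal{S}_{\mathcal{X}}$ be a sample drawn uniformly at random without replacement from $\mathcal{X}$. Then for any $\delta>0$, with probability at least $1-\delta$, $$P_H\ \ge\ p^-(\hat{\mathcal{X}}_H,\mathcal{S}_{\mathcal{X}}\cap\hat{\mathcal{X}}_H,p_H,0,1,\delta),$$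 and, with probability at least $1-\delta$, $$R_H\ \ge\ p^-(\mathcal{X}',\mathcal{S}_{\mathcal{X}}\cap\mathcal{X}',r_H,0,1,\delta).$$
   Context: PAC bound rules: $p^+$ and $p^-$ are functions which, given a finite set $\mathcal{P}$ (population), a subset $\mathcal{S}\subseteq\mathcal{P}$, a function $f:\mathcal{P}\to\mathbb{R}$, reals $a\le b$ and $\delta>0$, return a real number, and satisfy the following: for every finite set $\mathcal{P}$ with $|\mathcal{P}|=n$, every sample size $s$, and every $f$ with $a\le f(x)\le b$ for all $x\in\mathcal{P}$, if $\mathcal{S}$ is a size-$s$ sample drawn uniformly at random without replacement from $\mathcal{P}$ and $\mu=\frac1n\sum_{x\in\mathcal{P}}f(x)$, then $\Pr\{\mu>p^+(\mathcal{P},\mathcal{S},f,a,b,\delta)\}\le\delta$ and $\Pr\{\mu<p^-(\mathcal{P},\mathcal{S},f,a,b,\delta)\}\le\delta$. *)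

theory Defs
  imports "HOL-Probability.Probability"
begin

definition sample_pmf :: "'a set \<Rightarrow> nat \<Rightarrow> 'a set pmf" where
  "sample_pmf P s = pmf_of_set {S. S \<subseteq> P \<and> card S = s}"

text \<open>The lower half of the PAC bound rule property (the p^- part).\<close>
definition pac_lower_rule ::
  "('a set \<Rightarrow> 'a set \<Rightarrow> ('a \<Rightarrow> real) \<Rightarrow> real \<Rightarrow> real \<Rightarrow> real \<Rightarrow> real) \<Rightarrow> bool" where
  "pac_lower_rule pm \<longleftrightarrow>
     (\<forall>P s f a b \<delta>. finite P \<and> s \<le> card P \<and> a \<le> b \<and> \<delta> > 0 \<and>
        (\<forall>x\<in>P. a \<le> f x \<and> f x \<le> b) \<longrightarrow>
        measure_pmf.prob (sample_pmf P s)
          {S. (\<Sum>x\<in>P. f x) / real (card P) < pm P S f a b \<delta>} \<le> \<delta>)"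

definition matches_of :: "('x \<times> 'y) set \<Rightarrow> 'x \<Rightarrow> ('x \<times> 'y) set" where
  "matches_of M x = {p \<in> M. fst p = x}"

definition matched_set :: "'x set \<Rightarrow> ('x \<times> 'y) set \<Rightarrow> 'x set" where
  "matched_set X M = {x \<in> X. matches_of M x \<noteq> {}}"

definition p_H :: "('x \<times> 'y) set \<Rightarrow> ('x \<times> 'y) set \<Rightarrow> 'x \<Rightarrow> real" where
  "p_H M MH x = real (card (matches_of MH x \<inter> matches_of M x)) / real (card (matches_of MH x))"

definition r_H :: "('x \<times> 'y) set \<Rightarrow> ('x \<times> 'y) set \<Rightarrow> 'x \<Rightarrow> real" where
  "r_H M MH x = real (card (matches_of MH x \<inter> matches_of M x)) / real (card (matches_of M x))"

definition query_precision :: "'x set \<Rightarrow> ('x \<times> 'y) set \<Rightarrow> ('x \<times> 'y) set \<Rightarrow> real" where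
  "query_precision X M MH =
     (\<Sum>x\<in>matched_set X MH. p_H M MH x) / real (card (matched_set X MH))"

definition query_recall :: "'x set \<Rightarrow> ('x \<times> 'y) set \<Rightarrow> ('x \<times> 'y) set \<Rightarrow> real" where
  "query_recall X M MH =
     (\<Sum>x\<in>matched_set X M. r_H M MH x) / real (card (matched_set X M))"

end

theory Submission imports Defs begin

text \<open>Conditioned on \<open>card (S \<inter> A) = k\<close>, the trace \<open>S \<inter> A\<close> of a uniform \<open>s\<close>-subset \<open>S\<close> of \<open>X\<close>
  is a uniform \<open>k\<close>-subset of \<open>A\<close>: every \<open>k\<close>-subset of \<open>A\<close> extends in exactly
  \<open>card (X - A) choose (s - k)\<close> ways. The failure probability of the trace is therefore a
  mixture of failure probabilities of uniform samples from \<open>A\<close>, each at most \<open>\<delta>\<close> by the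
  PAC bound rule. Precision and recall are the cases \<open>A = matched_set X MH\<close> and
  \<open>A = matched_set X M\<close>, whose per-element scores lie in \<open>[0, 1]\<close>.\<close>

lemma card_subsets_with_trace:
  assumes "finite X" and "A \<subseteq> X" and "k \<le> s"
  shows "card {S. S \<subseteq> X \<and> card S = s \<and> card (S \<inter> A) = k \<and> Q (S \<inter> A)}
       = card {T. T \<subseteq> A \<and> card T = k \<and> Q T} * (card (X - A) choose (s - k))"
proof -
  let ?L = "{S. S \<subseteq> X \<and> card S = s \<and> card (S \<inter> A) = k \<and> Q (S \<inter> A)}"
  let ?T = "{T. T \<subseteq> A \<and> card T = k \<and> Q T}"
  let ?R = "{R. R \<subseteq> X - A \<and> card R = s - k}"
  have card_split: "card S = card (S \<inter> A) + card (S - A)" if "S \<subseteq> X" for S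
    using that assms(1) by (meson card_Int_Diff finite_subset)
  have "bij_betw (\<lambda>S. (S \<inter> A, S - A)) ?L (?T \<times> ?R)"
  proof (rule bij_betw_byWitness[where f' = "\<lambda>p. fst p \<union> snd p"])
    show "(\<lambda>S. (S \<inter> A, S - A)) ` ?L \<subseteq> ?T \<times> ?R"
      using card_split by auto
    have "T \<union> R \<in> ?L" if T: "T \<in> ?T" and R: "R \<in> ?R" for T R
    proof -
      have "card (T \<union> R) = card T + card R"
        using T R assms(1,2) by (intro card_Un_disjoint) (auto intro: finite_subset)
      moreover have "(T \<union> R) \<inter> A = T" using T R by auto
      ultimately show ?thesis using T R assms(2,3) by auto
    qed
    then show "(\<lambda>p. fst p \<union> snd p) ` (?T \<times> ?R) \<subseteq> ?L"
      by force
  qed auto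
  then have "card ?L = card ?T * card ?R"
    by (simp add: bij_betw_same_card card_cartesian_product)
  also have "card ?R = card (X - A) choose (s - k)"
    using assms(1) by (simp add: n_subsets)
  finally show ?thesis .
qed

lemma card_subsets_by_trace:
  assumes "finite X" and "A \<subseteq> X"
  shows "card {S. S \<subseteq> X \<and> card S = s \<and> Q (S \<inter> A)}
       = (\<Sum>k\<le>s. card {T. T \<subseteq> A \<and> card T = k \<and> Q T} * (card (X - A) choose (s - k)))"
proof -
  let ?P = "\<lambda>k. {S. S \<subseteq> X \<and> card S = s \<and> card (S \<inter> A) = k \<and> Q (S \<inter> A)}"
  have "{S. S \<subseteq> X \<and> card S = s \<and> Q (S \<inter> A)} = (\<Union>k\<le>s. ?P k)"
  proof (intro equalityI subsetI)
    fix S assume S: "S \<in> {S. S \<subseteq> X \<and> card S = s \<and> Q (S \<inter> A)}"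
    then have "card (S \<inter> A) \<le> s"
      using assms(1) by (metis (mono_tags) mem_Collect_eq card_mono finite_subset inf.cobounded1)
    with S show "S \<in> (\<Union>k\<le>s. ?P k)" by auto
  qed auto
  also have "card (\<Union>k\<le>s. ?P k) = (\<Sum>k\<le>s. card (?P k))"
    by (rule card_UN_disjoint) (use assms(1) in \<open>auto intro: finite_subset[of _ "Pow X"]\<close>)
  also have "\<dots> = (\<Sum>k\<le>s. card {T. T \<subseteq> A \<and> card T = k \<and> Q T} * (card (X - A) choose (s - k)))"
    by (intro sum.cong) (simp_all add: card_subsets_with_trace[OF assms])
  finally show ?thesis .
qed

lemma prob_sample_pmf:
  assumes "finite X" and "s \<le> card X"
  shows "measure_pmf.prob (sample_pmf X s) E
       = real (card {S. S \<subseteq> X \<and> card S = s \<and> S \<in> E}) / real (card X choose s)"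
proof -
  let ?U = "{S. S \<subseteq> X \<and> card S = s}"
  have "?U \<noteq> {}"
    using assms by (metis (mono_tags, lifting) empty_Collect_eq obtain_subset_with_card_n)
  moreover have "finite ?U" using assms(1) by simp
  moreover have "?U \<inter> E = {S. S \<subseteq> X \<and> card S = s \<and> S \<in> E}" by auto
  ultimately show ?thesis
    using assms(1) by (simp add: sample_pmf_def measure_pmf_of_set n_subsets)
qed

lemma prob_sample_pmf_trace_le:
  assumes "finite X" and "A \<subseteq> X" and "s \<le> card X"
    and bound: "\<And>k. k \<le> card A \<Longrightarrow> measure_pmf.prob (sample_pmf A k) {T. Q T} \<le> \<delta>"
  shows "measure_pmf.prob (sample_pmf X s) {S. Q (S \<inter> A)} \<le> \<delta>"
proof -
  have "finite A" using assms(1,2) finite_subset by blast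
  have count_bound: "real (card {T. T \<subseteq> A \<and> card T = k \<and> Q T}) \<le> \<delta> * real (card A choose k)"
    for k
  proof (cases "k \<le> card A")
    case True
    then show ?thesis
      using bound[OF True] prob_sample_pmf[OF \<open>finite A\<close> True, of "{T. Q T}"]
      by (simp add: divide_le_eq)
  next
    case False
    then have "{T. T \<subseteq> A \<and> card T = k \<and> Q T} = {}"
      using card_mono[OF \<open>finite A\<close>] by fastforce
    then show ?thesis using False by (simp only: card.empty binomial_eq_0)
  qed
  let ?c = "\<lambda>k. real (card (X - A) choose (s - k))"
  have "real (card {S. S \<subseteq> X \<and> card S = s \<and> Q (S \<inter> A)})
      = (\<Sum>k\<le>s. real (card {T. T \<subseteq> A \<and> card T = k \<and> Q T}) * ?c k)"
    using card_subsets_by_trace[OF assms(1,2), of s Q] by simp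
  also have "\<dots> \<le> \<delta> * (\<Sum>k\<le>s. real (card A choose k) * ?c k)"
    unfolding sum_distrib_left
    by (intro sum_mono) (use count_bound in \<open>auto intro: mult_right_mono simp: mult.assoc[symmetric]\<close>)
  also have "(\<Sum>k\<le>s. real (card A choose k) * ?c k) = real (card X choose s)"
    using card_subsets_by_trace[OF assms(1,2), of s "\<lambda>_. True"] assms(1) \<open>finite A\<close>
    by (simp add: n_subsets)
  finally show ?thesis
    using assms(3) by (simp add: prob_sample_pmf[OF assms(1,3)] divide_le_eq)
qed

lemma pac_lower_rule_trace:
  assumes "pac_lower_rule pm" and "finite X" and "P \<subseteq> X" and "s \<le> card X" and "\<delta> > 0"
    and "\<And>x. x \<in> P \<Longrightarrow> 0 \<le> f x \<and> f x \<le> 1"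
  shows "measure_pmf.prob (sample_pmf X s)
           {S. (\<Sum>x\<in>P. f x) / real (card P) \<ge> pm P (S \<inter> P) f 0 1 \<delta>} \<ge> 1 - \<delta>"
proof -
  let ?fail = "\<lambda>T. (\<Sum>x\<in>P. f x) / real (card P) < pm P T f 0 1 \<delta>"
  have "finite P" using assms(2,3) finite_subset by blast
  then have "measure_pmf.prob (sample_pmf X s) {S. ?fail (S \<inter> P)} \<le> \<delta>"
    using assms unfolding pac_lower_rule_def
    by (intro prob_sample_pmf_trace_le[OF assms(2,3,4)]) auto
  moreover have "{S. (\<Sum>x\<in>P. f x) / real (card P) \<ge> pm P (S \<inter> P) f 0 1 \<delta>}
               = UNIV - {S. ?fail (S \<inter> P)}"
    by auto
  ultimately show ?thesis
    using measure_pmf.prob_compl[of "{S. ?fail (S \<inter> P)}" "sample_pmf X s"] by simp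
qed

lemma card_Int_div_card_bounds:
  assumes "finite B"
  shows "0 \<le> real (card (B \<inter> C)) / real (card B) \<and> real (card (B \<inter> C)) / real (card B) \<le> 1"
proof -
  have "card (B \<inter> C) \<le> card B" using assms by (simp add: card_mono)
  then show ?thesis by (cases "card B = 0") (auto simp: divide_le_eq)
qed

theorem theorem4:
  fixes X :: "'x set" and Y :: "'y set" and M MH :: "('x \<times> 'y) set"
    and pm :: "'x set \<Rightarrow> 'x set \<Rightarrow> ('x \<Rightarrow> real) \<Rightarrow> real \<Rightarrow> real \<Rightarrow> real \<Rightarrow> real"
    and s :: nat and \<delta> :: real
  assumes "finite X" and "finite Y"
    and "M \<subseteq> X \<times> Y" and "MH \<subseteq> X \<times> Y"
    and "pac_lower_rule pm"
    and "s \<le> card X"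
    and "\<delta> > 0"
  shows "measure_pmf.prob (sample_pmf X s)
           {S. query_precision X M MH \<ge>
               pm (matched_set X MH) (S \<inter> matched_set X MH) (p_H M MH) 0 1 \<delta>} \<ge> 1 - \<delta> \<and>
         measure_pmf.prob (sample_pmf X s)
           {S. query_recall X M MH \<ge>
               pm (matched_set X M) (S \<inter> matched_set X M) (r_H M MH) 0 1 \<delta>} \<ge> 1 - \<delta>"
proof -
  have finite_matches: "finite (matches_of N x)" if "N \<subseteq> X \<times> Y" for N x
    using that assms(1,2) unfolding matches_of_def by (auto intro: finite_subset)
  have matched_subset: "matched_set X N \<subseteq> X" for N :: "('x \<times> 'y) set"
    unfolding matched_set_def by auto
  have "0 \<le> p_H M MH x \<and> p_H M MH x \<le> 1" for x
    unfolding p_H_def by (rule card_Int_div_card_bounds[OF finite_matches[OF assms(4)]])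
  moreover have "0 \<le> r_H M MH x \<and> r_H M MH x \<le> 1" for x
    using card_Int_div_card_bounds[OF finite_matches[OF assms(3)], of x "matches_of MH x"]
    unfolding r_H_def by (simp add: Int_commute)
  ultimately show ?thesis
    unfolding query_precision_def query_recall_def
    using pac_lower_rule_trace[OF assms(5,1) matched_subset assms(6,7)] by blast
qed

end
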